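(* Let $M$ be a mutually algebraic structure with universe an infinite cardinal $\lambda$ such that $Th(M)$ is not purely monadic. Then for some $k\ge2$ there is a subset $Y\subseteq\lambda^k$ definable in $M$ with parameters that is mutually algebraic and such that $Y\setminus\Delta_k$ is infinite, where $\Delta_k=\{(a,\dots,a):a\in\lambda\}$.
   Context: $Y\subseteq\lambda^k$ is mutually algebraic if there is an integer $m$ such that for every $a\in\lambda$ at most $m$ tuples of $Y$ have $a$ as a coordinate. $Y^*\subseteq\lambda^{k+\ell}$ is padded mutually algebraic if for some permutation $\sigma$ of the $k+\ell$ coordinates, $Y^*=\sigma(Y\times\lambda^\ell)$ for some mutually algebraic $Y\subseteq\lambda^k$. A structure $M$ with universe $\lambda$ is mutually algebraic if every set definable with parameters in $M$ is a boolean combination of parameter-definable padded mutually algebraic sets. A complete theory $T$ is purely monadic if for every model with universe $\lambda$, every parameter-definable $Y\subseteq\lambda^k$ is definable in some structure $(\lambda,U_1,\dots,U_n)$ with $U_i$ unary. *)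

theory Defs
  imports Main
begin

datatype 'f trm = Var nat | Fun 'f "'f trm list"

datatype ('f, 'r) fm =
    Eq "'f trm" "'f trm"
  | Rel 'r "'f trm list"
  | Neg "('f, 'r) fm"
  | Conj "('f, 'r) fm" "('f, 'r) fm"
  | Ex nat "('f, 'r) fm"

text \<open>A structure whose universe is the whole type 'a: interpretations of the
function symbols and of the relation symbols.\<close>
type_synonym ('f, 'r, 'a) struct = "('f \<Rightarrow> 'a list \<Rightarrow> 'a) \<times> ('r \<Rightarrow> 'a list \<Rightarrow> bool)"

fun eval :: "('f, 'r, 'a) struct \<Rightarrow> (nat \<Rightarrow> 'a) \<Rightarrow> 'f trm \<Rightarrow> 'a" where
  "eval S e (Var n) = e n"
| "eval S e (Fun f ts) = fst S f (map (eval S e) ts)"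

fun sat :: "('f, 'r, 'a) struct \<Rightarrow> ('f, 'r) fm \<Rightarrow> (nat \<Rightarrow> 'a) \<Rightarrow> bool" where
  "sat S (Eq s t) e = (eval S e s = eval S e t)"
| "sat S (Rel r ts) e = snd S r (map (eval S e) ts)"
| "sat S (Neg \<phi>) e = (\<not> sat S \<phi> e)"
| "sat S (Conj \<phi> \<psi>) e = (sat S \<phi> e \<and> sat S \<psi> e)"
| "sat S (Ex x \<phi>) e = (\<exists>a. sat S \<phi> (e(x := a)))"

fun fv_trm :: "'f trm \<Rightarrow> nat set" where
  "fv_trm (Var n) = {n}"
| "fv_trm (Fun f ts) = (\<Union>t\<in>set ts. fv_trm t)"

fun fv :: "('f, 'r) fm \<Rightarrow> nat set" where
  "fv (Eq s t) = fv_trm s \<union> fv_trm t"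
| "fv (Rel r ts) = (\<Union>t\<in>set ts. fv_trm t)"
| "fv (Neg \<phi>) = fv \<phi>"
| "fv (Conj \<phi> \<psi>) = fv \<phi> \<union> fv \<psi>"
| "fv (Ex x \<phi>) = fv \<phi> - {x}"

definition sentence :: "('f, 'r) fm \<Rightarrow> bool" where
  "sentence \<phi> \<longleftrightarrow> fv \<phi> = {}"

definition models_Th :: "('f, 'r, 'b) struct \<Rightarrow> ('f, 'r, 'a) struct \<Rightarrow> bool" where
  "models_Th N M \<longleftrightarrow> (\<forall>\<phi>. sentence \<phi> \<longrightarrow> (\<forall>e. sat M \<phi> e) \<longrightarrow> (\<forall>e. sat N \<phi> e))"

definition tuples :: "nat \<Rightarrow> 'a list set" where
  "tuples k = {xs. length xs = k}"

definition definable :: "('f, 'r, 'a) struct \<Rightarrow> nat \<Rightarrow> 'a list set \<Rightarrow> bool" where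
  "definable S k Y \<longleftrightarrow> (\<exists>\<phi> (p :: nat \<Rightarrow> 'a).
      Y = {xs \<in> tuples k. sat S \<phi> (\<lambda>i. if i < k then xs ! i else p i)})"

definition mutually_algebraic :: "nat \<Rightarrow> 'a list set \<Rightarrow> bool" where
  "mutually_algebraic k Y \<longleftrightarrow> Y \<subseteq> tuples k \<and>
     (\<exists>m::nat. \<forall>a. finite {t \<in> Y. a \<in> set t} \<and> card {t \<in> Y. a \<in> set t} \<le> m)"

text \<open>Y* \<subseteq> \<lambda>^(k+l) is padded mutually algebraic: Y* = \<sigma>(Y \<times> \<lambda>^l) for a permutation
\<sigma> of the coordinates and a mutually algebraic Y \<subseteq> \<lambda>^k.\<close>
definition padded_ma :: "nat \<Rightarrow> 'a list set \<Rightarrow> bool" where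
  "padded_ma n Ys \<longleftrightarrow> (\<exists>k l \<sigma> Y. k + l = n \<and> bij_betw \<sigma> {..<n} {..<n} \<and>
      mutually_algebraic k Y \<and>
      Ys = {s \<in> tuples n. take k (map (\<lambda>i. s ! \<sigma> i) [0..<n]) \<in> Y})"

inductive_set bool_comb :: "nat \<Rightarrow> 'a list set set \<Rightarrow> 'a list set set"
  for k :: nat and F :: "'a list set set" where
  base: "A \<in> F \<Longrightarrow> A \<in> bool_comb k F"
| top: "tuples k \<in> bool_comb k F"
| union: "A \<in> bool_comb k F \<Longrightarrow> B \<in> bool_comb k F \<Longrightarrow> A \<union> B \<in> bool_comb k F"
| compl: "A \<in> bool_comb k F \<Longrightarrow> tuples k - A \<in> bool_comb k F"

definition ma_structure :: "('f, 'r, 'a) struct \<Rightarrow> bool" where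
  "ma_structure M \<longleftrightarrow> (\<forall>k Y. definable M k Y \<longrightarrow>
      Y \<in> bool_comb k {P. definable M k P \<and> padded_ma k P})"

fun monadic_trm :: "'f trm \<Rightarrow> bool" where
  "monadic_trm (Var n) = True"
| "monadic_trm (Fun f ts) = False"

fun monadic_fm :: "('f, nat) fm \<Rightarrow> bool" where
  "monadic_fm (Eq s t) = (monadic_trm s \<and> monadic_trm t)"
| "monadic_fm (Rel r ts) = (length ts = 1 \<and> (\<forall>t\<in>set ts. monadic_trm t))"
| "monadic_fm (Neg \<phi>) = monadic_fm \<phi>"
| "monadic_fm (Conj \<phi> \<psi>) = (monadic_fm \<phi> \<and> monadic_fm \<psi>)"
| "monadic_fm (Ex x \<phi>) = monadic_fm \<phi>"

definition unary_struct :: "(nat \<Rightarrow> 'a set) \<Rightarrow> (unit, nat, 'a) struct" where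
  "unary_struct U = ((\<lambda>_ _. undefined), (\<lambda>i xs. xs ! 0 \<in> U i))"

text \<open>Y \<subseteq> universe^k is definable (without parameters) in some expansion by finitely
many unary predicates (a formula mentions only finitely many U i).\<close>
definition monadically_definable :: "nat \<Rightarrow> 'a list set \<Rightarrow> bool" where
  "monadically_definable k Y \<longleftrightarrow> (\<exists>(U :: nat \<Rightarrow> 'a set) (\<phi> :: (unit, nat) fm) (e :: nat \<Rightarrow> 'a).
      monadic_fm \<phi> \<and> fv \<phi> \<subseteq> {..<k} \<and>
      Y = {xs \<in> tuples k. sat (unary_struct U) \<phi> (\<lambda>i. if i < k then xs ! i else e i)})"

definition non_monadic_model :: "('f, 'r, 'b) struct \<Rightarrow> bool" where
  "non_monadic_model N \<longleftrightarrow> (\<exists>k Y. definable N k Y \<and> \<not> monadically_definable k Y)"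

definition diag :: "nat \<Rightarrow> 'a list set" where
  "diag k = {xs \<in> tuples k. \<exists>a. xs = replicate k a}"

end

(*
  Argue by contraposition: assume every definable mutually algebraic Y has only finitely many
  tuples off the diagonal. A padded mutually algebraic set P is the preimage of such a Y under a
  selection of coordinates, so it splits into finitely many sets "the selected coordinates equal
  t" and the set of tuples whose selected coordinates are constant with constant value in Y; each
  piece is a boolean combination of equations between coordinates and of formulas with a single
  free coordinate. Finiteness of Y off the diagonal is obtained from a definable mutually
  algebraic copy of Y in the full power, in which the unselected coordinates repeat the first one.

  As M is mutually algebraic, every set definable in M thus has such a one-variable definition.
  That a formula is equivalent to its one-variable form for suitable parameters is expressed by a
  sentence, which therefore holds in every model N of Th(M). But in N every one-variable
  combination is definable from unary predicates, so N could not witness that Th(M) is not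
  purely monadic.
*)

theory Submission
  imports Defs
begin

lemma finite_fv_trm: "finite (fv_trm t)"
  by (induction t) auto

lemma finite_fv: "finite (fv \<phi>)"
  by (induction \<phi>) (auto simp: finite_fv_trm)

lemma eval_cong: "(\<forall>x\<in>fv_trm t. e x = e' x) \<Longrightarrow> eval S e t = eval S e' t"
  by (induction t) (auto cong: map_cong)

lemma sat_cong: "(\<forall>x\<in>fv \<phi>. e x = e' x) \<Longrightarrow> sat S \<phi> e = sat S \<phi> e'"
proof (induction \<phi> arbitrary: e e')
  case (Eq s t)
  then show ?case
    using eval_cong[of s e e' S] eval_cong[of t e e' S] by auto
next
  case (Rel r ts)
  then have "map (eval S e) ts = map (eval S e') ts"
    by (auto intro!: map_cong eval_cong)
  then show ?case by (simp only: sat.simps)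
next
  case (Neg \<phi>)
  have "sat S \<phi> e = sat S \<phi> e'" by (rule Neg.IH) (use Neg.prems in auto)
  then show ?case by simp
next
  case (Conj \<phi> \<psi>)
  have "sat S \<phi> e = sat S \<phi> e'" by (rule Conj.IH(1)) (use Conj.prems in auto)
  moreover have "sat S \<psi> e = sat S \<psi> e'" by (rule Conj.IH(2)) (use Conj.prems in auto)
  ultimately show ?case by simp
next
  case (Ex x \<phi>)
  have "sat S \<phi> (e(x := a)) = sat S \<phi> (e'(x := a))" for a
    by (rule Ex.IH) (use Ex.prems in auto)
  then show ?case by simp
qed

definition true_fm :: "('f, 'r) fm" where
  "true_fm = Neg (Ex 0 (Neg (Eq (Var 0) (Var 0))))"

lemma sat_true_fm [simp]: "sat S true_fm e"
  by (simp add: true_fm_def)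

lemma fv_true_fm [simp]: "fv true_fm = {}"
  by (simp add: true_fm_def)

lemma monadic_true_fm [simp]: "monadic_fm true_fm"
  by (simp add: true_fm_def)

definition iff_fm :: "('f, 'r) fm \<Rightarrow> ('f, 'r) fm \<Rightarrow> ('f, 'r) fm" where
  "iff_fm \<phi> \<psi> = Conj (Neg (Conj \<phi> (Neg \<psi>))) (Neg (Conj \<psi> (Neg \<phi>)))"

lemma sat_iff_fm [simp]: "sat S (iff_fm \<phi> \<psi>) e \<longleftrightarrow> (sat S \<phi> e \<longleftrightarrow> sat S \<psi> e)"
  by (auto simp: iff_fm_def)

fun exs :: "nat list \<Rightarrow> ('f, 'r) fm \<Rightarrow> ('f, 'r) fm" where
  "exs [] \<phi> = \<phi>"
| "exs (x # xs) \<phi> = Ex x (exs xs \<phi>)"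

lemma sat_exs:
  "sat S (exs xs \<phi>) e \<longleftrightarrow> (\<exists>e'. (\<forall>i. i \<notin> set xs \<longrightarrow> e' i = e i) \<and> sat S \<phi> e')"
proof (induction xs arbitrary: e)
  case (Cons x xs)
  show ?case
  proof
    assume "sat S (exs (x # xs) \<phi>) e"
    then obtain a e' where "\<forall>i. i \<notin> set xs \<longrightarrow> e' i = (e(x := a)) i" "sat S \<phi> e'"
      using Cons.IH by auto
    then show "\<exists>e'. (\<forall>i. i \<notin> set (x # xs) \<longrightarrow> e' i = e i) \<and> sat S \<phi> e'"
      by (intro exI[of _ e']) auto
  next
    assume "\<exists>e'. (\<forall>i. i \<notin> set (x # xs) \<longrightarrow> e' i = e i) \<and> sat S \<phi> e'"
    then obtain e' where e': "\<forall>i. i \<notin> set (x # xs) \<longrightarrow> e' i = e i" "sat S \<phi> e'"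
      by blast
    then have "sat S (exs xs \<phi>) (e(x := e' x))"
      using Cons.IH by auto
    then show "sat S (exs (x # xs) \<phi>) e"
      by auto
  qed
qed (auto simp flip: fun_eq_iff)

lemma fv_exs [simp]: "fv (exs xs \<phi>) = fv \<phi> - set xs"
  by (induction xs) auto

fun conjs :: "('f, 'r) fm list \<Rightarrow> ('f, 'r) fm" where
  "conjs [] = true_fm"
| "conjs (\<phi> # \<phi>s) = Conj \<phi> (conjs \<phi>s)"

lemma sat_conjs [simp]: "sat S (conjs \<phi>s) e \<longleftrightarrow> (\<forall>\<phi>\<in>set \<phi>s. sat S \<phi> e)"
  by (induction \<phi>s) auto

lemma fv_conjs [simp]: "fv (conjs \<phi>s) = (\<Union>\<phi>\<in>set \<phi>s. fv \<phi>)"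
  by (induction \<phi>s) auto

fun rename_trm :: "(nat \<Rightarrow> nat) \<Rightarrow> 'f trm \<Rightarrow> 'f trm" where
  "rename_trm f (Var v) = Var (f v)"
| "rename_trm f (Fun g ts) = Fun g (map (rename_trm f) ts)"

fun rename_fm :: "(nat \<Rightarrow> nat) \<Rightarrow> ('f, 'r) fm \<Rightarrow> ('f, 'r) fm" where
  "rename_fm f (Eq s t) = Eq (rename_trm f s) (rename_trm f t)"
| "rename_fm f (Rel r ts) = Rel r (map (rename_trm f) ts)"
| "rename_fm f (Neg \<phi>) = Neg (rename_fm f \<phi>)"
| "rename_fm f (Conj \<phi> \<psi>) = Conj (rename_fm f \<phi>) (rename_fm f \<psi>)"
| "rename_fm f (Ex x \<phi>) = Ex (f x) (rename_fm f \<phi>)"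

lemma eval_rename_trm: "eval S e (rename_trm f t) = eval S (e \<circ> f) t"
  by (induction t) (auto cong: map_cong)

lemma fv_rename_trm: "fv_trm (rename_trm f t) = f ` fv_trm t"
  by (induction t) auto

lemma sat_rename_fm: "inj f \<Longrightarrow> sat S (rename_fm f \<phi>) e = sat S \<phi> (e \<circ> f)"
proof (induction \<phi> arbitrary: e)
  case (Ex x \<phi>)
  then have "(e(f x := a)) \<circ> f = (e \<circ> f)(x := a)" for a
    by (auto simp: inj_eq)
  then show ?case
    using Ex by (simp only: rename_fm.simps sat.simps)
qed (auto simp: eval_rename_trm comp_def)

lemma fv_rename_fm: "inj f \<Longrightarrow> fv (rename_fm f \<phi>) = f ` fv \<phi>"
  by (induction \<phi>) (auto simp: fv_rename_trm image_set_diff image_UN)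

fun map_rel :: "('r \<Rightarrow> 's) \<Rightarrow> ('f, 'r) fm \<Rightarrow> ('f, 's) fm" where
  "map_rel h (Eq s t) = Eq s t"
| "map_rel h (Rel r ts) = Rel (h r) ts"
| "map_rel h (Neg \<phi>) = Neg (map_rel h \<phi>)"
| "map_rel h (Conj \<phi> \<psi>) = Conj (map_rel h \<phi>) (map_rel h \<psi>)"
| "map_rel h (Ex x \<phi>) = Ex x (map_rel h \<phi>)"

lemma fv_map_rel [simp]: "fv (map_rel h \<phi>) = fv \<phi>"
  by (induction \<phi>) auto

lemma monadic_map_rel [simp]: "monadic_fm (map_rel h \<phi>) = monadic_fm \<phi>"
  by (induction \<phi>) auto

lemma eval_unary_struct: "eval (unary_struct U) e t = eval (unary_struct V) e t"
  by (induction t) (auto simp: unary_struct_def)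

lemma sat_map_rel_unary_struct:
  "sat (unary_struct U) (map_rel h \<phi>) e = sat (unary_struct (U \<circ> h)) \<phi> e"
proof (induction \<phi> arbitrary: e)
  case (Eq s t)
  then show ?case
    using eval_unary_struct[of U e _ "U \<circ> h"] by (simp add: comp_def)
next
  case (Rel r ts)
  have "map (eval (unary_struct U) e) ts = map (eval (unary_struct (U \<circ> h)) e) ts"
    using eval_unary_struct by auto
  then show ?case
    by (simp only: map_rel.simps sat.simps) (simp add: unary_struct_def)
qed auto

section \<open>Definability from unary predicates\<close>

definition monadic_pred :: "nat \<Rightarrow> ('a list \<Rightarrow> bool) \<Rightarrow> bool" where
  "monadic_pred k P \<longleftrightarrow> monadically_definable k {xs \<in> tuples k. P xs}"

lemma monadic_pred_iff:
  "monadic_pred k P \<longleftrightarrow> (\<exists>(U :: nat \<Rightarrow> 'a set) (\<phi> :: (unit, nat) fm).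
     monadic_fm \<phi> \<and> fv \<phi> \<subseteq> {..<k} \<and>
     (\<forall>xs\<in>tuples k. P xs \<longleftrightarrow> sat (unary_struct U) \<phi> (\<lambda>i. if i < k then xs ! i else undefined)))"
    (is "_ \<longleftrightarrow> (\<exists>U \<phi>. ?def U \<phi>)")
proof
  assume "monadic_pred k P"
  then obtain U \<phi> e where \<phi>: "monadic_fm \<phi>" "fv \<phi> \<subseteq> {..<k}"
    and P: "{xs \<in> tuples k. P xs} =
      {xs \<in> tuples k. sat (unary_struct U) \<phi> (\<lambda>i. if i < k then xs ! i else e i)}"
    unfolding monadic_pred_def monadically_definable_def by blast
  have "sat (unary_struct U) \<phi> (\<lambda>i. if i < k then xs ! i else e i) =
      sat (unary_struct U) \<phi> (\<lambda>i. if i < k then xs ! i else undefined)" for xs :: "'a list"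
    by (rule sat_cong) (use \<phi>(2) in auto)
  then have "?def U \<phi>"
    using \<phi> P by blast
  then show "\<exists>U \<phi>. ?def U \<phi>" by blast
next
  assume "\<exists>U \<phi>. ?def U \<phi>"
  then obtain U \<phi> where "?def U \<phi>" by blast
  then show "monadic_pred k P"
    unfolding monadic_pred_def monadically_definable_def
    by (intro exI[of _ U] exI[of _ \<phi>] exI[of _ "\<lambda>_. undefined"]) blast
qed

lemma monadic_pred_cong: "monadic_pred k Q \<Longrightarrow> (\<And>xs. P xs = Q xs) \<Longrightarrow> monadic_pred k P"
  by (subgoal_tac "P = Q") auto

lemma monadic_pred_const: "monadic_pred k (\<lambda>_. b)"
  unfolding monadic_pred_iff
  by (intro exI[of _ "\<lambda>_. {}"] exI[of _ "if b then true_fm else Neg true_fm"]) auto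

lemma monadic_pred_eq: "i < k \<Longrightarrow> j < k \<Longrightarrow> monadic_pred k (\<lambda>xs. xs ! i = xs ! j)"
  unfolding monadic_pred_iff
  by (intro exI[of _ "\<lambda>_. {}"] exI[of _ "Eq (Var i) (Var j)"]) auto

lemma monadic_pred_mem: "i < k \<Longrightarrow> monadic_pred k (\<lambda>xs. xs ! i \<in> A)"
  unfolding monadic_pred_iff
  by (intro exI[of _ "\<lambda>_. A"] exI[of _ "Rel 0 [Var i]"]) (auto simp: unary_struct_def)

lemma monadic_pred_not: "monadic_pred k P \<Longrightarrow> monadic_pred k (\<lambda>xs. \<not> P xs)"
  unfolding monadic_pred_iff by (metis fv.simps(3) monadic_fm.simps(3) sat.simps(3))

lemma monadic_pred_conj:
  assumes "monadic_pred k P" "monadic_pred k Q"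
  shows "monadic_pred k (\<lambda>xs. P xs \<and> Q xs)"
proof -
  obtain U1 \<phi>1 where \<phi>1: "monadic_fm \<phi>1" "fv \<phi>1 \<subseteq> {..<k}"
    "\<forall>xs\<in>tuples k. P xs \<longleftrightarrow> sat (unary_struct U1) \<phi>1 (\<lambda>i. if i < k then xs ! i else undefined)"
    using assms(1) unfolding monadic_pred_iff by blast
  obtain U2 \<phi>2 where \<phi>2: "monadic_fm \<phi>2" "fv \<phi>2 \<subseteq> {..<k}"
    "\<forall>xs\<in>tuples k. Q xs \<longleftrightarrow> sat (unary_struct U2) \<phi>2 (\<lambda>i. if i < k then xs ! i else undefined)"
    using assms(2) unfolding monadic_pred_iff by blast
  \<comment> \<open>interleave the two families of unary predicates\<close>
  define U where "U i = (if even i then U1 (i div 2) else U2 (i div 2))" for i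
  have "U \<circ> (\<lambda>i. 2 * i) = U1" "U \<circ> (\<lambda>i. 2 * i + 1) = U2"
    by (auto simp: U_def)
  then show ?thesis
    unfolding monadic_pred_iff
    by (intro exI[of _ U] exI[of _ "Conj (map_rel (\<lambda>i. 2 * i) \<phi>1) (map_rel (\<lambda>i. 2 * i + 1) \<phi>2)"])
      (use \<phi>1 \<phi>2 in \<open>auto simp: sat_map_rel_unary_struct\<close>)
qed

section \<open>One-variable definability\<close>

text \<open>In a formula for a subset of the n-th power, the variables below n are the coordinates
  and all others are parameters.\<close>

inductive one_var_comb :: "nat \<Rightarrow> ('f, 'r) fm \<Rightarrow> bool" for n where
  coord_eq: "i < n \<Longrightarrow> j < n \<Longrightarrow> one_var_comb n (Eq (Var i) (Var j))"
| one_coord: "fv \<theta> \<subseteq> insert i {n..} \<Longrightarrow> one_var_comb n \<theta>"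
| neg: "one_var_comb n \<phi> \<Longrightarrow> one_var_comb n (Neg \<phi>)"
| conj: "one_var_comb n \<phi> \<Longrightarrow> one_var_comb n \<psi> \<Longrightarrow> one_var_comb n (Conj \<phi> \<psi>)"

lemma one_var_comb_true_fm: "one_var_comb n true_fm"
  by (rule one_coord[of _ 0]) simp

lemma one_var_comb_conjs: "(\<forall>\<phi>\<in>set \<phi>s. one_var_comb n \<phi>) \<Longrightarrow> one_var_comb n (conjs \<phi>s)"
  by (induction \<phi>s) (auto intro: one_var_comb.conj one_var_comb_true_fm)

lemma one_var_comb_rename_fm:
  assumes "inj f" "\<forall>i<n. f i = i" "\<forall>i\<ge>n. f i \<ge> n"
  shows "one_var_comb n \<chi> \<Longrightarrow> one_var_comb n (rename_fm f \<chi>)"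
proof (induction rule: one_var_comb.induct)
  case (coord_eq i j)
  then show ?case using assms by (auto intro: one_var_comb.coord_eq)
next
  case (one_coord \<theta> i)
  then have "fv (rename_fm f \<theta>) \<subseteq> insert (f i) {n..}"
    using assms by (auto simp: fv_rename_fm)
  then show ?case by (rule one_var_comb.one_coord)
qed (auto intro: one_var_comb.intros)

definition defined_set :: "('f, 'r, 'a) struct \<Rightarrow> nat \<Rightarrow> ('f, 'r) fm \<Rightarrow> (nat \<Rightarrow> 'a) \<Rightarrow> 'a list set" where
  "defined_set S n \<chi> p = {xs \<in> tuples n. sat S \<chi> (\<lambda>i. if i < n then xs ! i else p i)}"

lemma definable_iff_defined_set: "definable S n Y \<longleftrightarrow> (\<exists>\<phi> p. Y = defined_set S n \<phi> p)"
  by (simp add: definable_def defined_set_def)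

lemma definable_restrict_coords:
  assumes "definable S n P" "i0 < n"
  shows "definable S n {xs \<in> P. \<forall>j<n. j \<notin> I \<longrightarrow> xs ! j = xs ! i0}"
proof -
  obtain \<phi> p where P: "P = defined_set S n \<phi> p"
    using assms(1) definable_iff_defined_set by blast
  let ?\<psi> = "Conj \<phi> (conjs (map (\<lambda>j. Eq (Var j) (Var i0)) (filter (\<lambda>j. j \<notin> I) [0..<n])))"
  have "{xs \<in> P. \<forall>j<n. j \<notin> I \<longrightarrow> xs ! j = xs ! i0} = defined_set S n ?\<psi> p"
    using assms(2) by (auto simp: P defined_set_def)
  then show ?thesis
    unfolding definable_iff_defined_set by blast
qed

definition one_var_definable :: "('f, 'r, 'a) struct \<Rightarrow> nat \<Rightarrow> 'a list set \<Rightarrow> bool" where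
  "one_var_definable S n Y \<longleftrightarrow> (\<exists>\<chi> p. one_var_comb n \<chi> \<and> Y = defined_set S n \<chi> p)"

lemma one_var_definable_tuples: "one_var_definable S n (tuples n)"
  unfolding one_var_definable_def defined_set_def
  by (intro exI[of _ true_fm] exI) (auto intro: one_var_comb_true_fm)

lemma one_var_definable_empty: "one_var_definable S n {}"
  unfolding one_var_definable_def defined_set_def
  by (intro exI[of _ "Neg true_fm"] exI) (auto intro: one_var_comb.neg one_var_comb_true_fm)

lemma one_var_definable_Diff:
  "one_var_definable S n Y \<Longrightarrow> one_var_definable S n (tuples n - Y)"
  unfolding one_var_definable_def defined_set_def
  by (elim exE conjE, intro exI conjI, rule one_var_comb.neg, assumption) auto

lemma one_var_definable_Un:
  assumes "one_var_definable S n Y" "one_var_definable S n Z"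
  shows "one_var_definable S n (Y \<union> Z)"
proof -
  obtain \<chi>Y pY where \<chi>Y: "one_var_comb n \<chi>Y" "Y = defined_set S n \<chi>Y pY"
    using assms(1) unfolding one_var_definable_def by blast
  obtain \<chi>Z pZ where \<chi>Z: "one_var_comb n \<chi>Z" "Z = defined_set S n \<chi>Z pZ"
    using assms(2) unfolding one_var_definable_def by blast
  \<comment> \<open>separate the parameters of the two formulas by sending them to even and odd offsets\<close>
  define fY where "fY i = (if i < n then i else n + 2 * (i - n))" for i
  define fZ where "fZ i = (if i < n then i else n + 2 * (i - n) + 1)" for i
  define p where "p i = (if even (i - n) then pY (n + (i - n) div 2) else pZ (n + (i - n) div 2))" for i
  have inj: "inj fY" "inj fZ"
    unfolding fY_def fZ_def inj_def by auto
  have "(\<lambda>i. if i < n then xs ! i else p i) \<circ> fY = (\<lambda>i. if i < n then xs ! i else pY i)"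
       "(\<lambda>i. if i < n then xs ! i else p i) \<circ> fZ = (\<lambda>i. if i < n then xs ! i else pZ i)" for xs
    by (auto simp: fY_def fZ_def p_def)
  then have "Y \<union> Z = defined_set S n (Neg (Conj (Neg (rename_fm fY \<chi>Y)) (Neg (rename_fm fZ \<chi>Z)))) p"
    using \<chi>Y(2) \<chi>Z(2) by (auto simp: defined_set_def sat_rename_fm[OF inj(1)] sat_rename_fm[OF inj(2)])
  moreover have "one_var_comb n (Neg (Conj (Neg (rename_fm fY \<chi>Y)) (Neg (rename_fm fZ \<chi>Z))))"
    by (intro one_var_comb.neg one_var_comb.conj one_var_comb_rename_fm \<chi>Y(1) \<chi>Z(1) inj)
      (auto simp: fY_def fZ_def)
  ultimately show ?thesis
    unfolding one_var_definable_def by blast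
qed

lemma one_var_definable_UN:
  "finite A \<Longrightarrow> (\<And>a. a \<in> A \<Longrightarrow> one_var_definable S n (Y a)) \<Longrightarrow> one_var_definable S n (\<Union>a\<in>A. Y a)"
  by (induction A rule: finite_induct) (auto intro: one_var_definable_empty one_var_definable_Un)

lemma monadic_pred_sat_Eq:
  "monadic_pred k (\<lambda>xs. sat N (Eq (Var i) (Var j)) (\<lambda>l. if l < k then xs ! l else p l))"
proof -
  consider "i < k" "j < k" | "i < k" "\<not> j < k" | "\<not> i < k" "j < k" | "\<not> i < k" "\<not> j < k"
    by blast
  then show ?thesis
  proof cases
    case 1
    show ?thesis by (rule monadic_pred_cong[OF monadic_pred_eq]) (use 1 in auto)
  next
    case 2
    show ?thesis by (rule monadic_pred_cong[OF monadic_pred_mem[of i k "{p j}"]]) (use 2 in auto)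
  next
    case 3
    show ?thesis by (rule monadic_pred_cong[OF monadic_pred_mem[of j k "{p i}"]]) (use 3 in auto)
  next
    case 4
    show ?thesis by (rule monadic_pred_cong[OF monadic_pred_const[of k "p i = p j"]]) (use 4 in auto)
  qed
qed

lemma monadic_pred_sat_one_coord:
  assumes "fv \<theta> \<subseteq> insert i {n..}" "k \<le> n"
  shows "monadic_pred k (\<lambda>xs. sat N \<theta> (\<lambda>l. if l < k then xs ! l else p l))"
proof (cases "i < k")
  case True
  show ?thesis
  proof (rule monadic_pred_cong[OF monadic_pred_mem[OF True, of "{a. sat N \<theta> (p(i := a))}"]])
    show "sat N \<theta> (\<lambda>l. if l < k then xs ! l else p l) = (xs ! i \<in> {a. sat N \<theta> (p(i := a))})" for xs
      by (simp, rule sat_cong) (use assms True in auto)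
  qed
next
  case False
  show ?thesis
  proof (rule monadic_pred_cong[OF monadic_pred_const[of k "sat N \<theta> p"]])
    show "sat N \<theta> (\<lambda>l. if l < k then xs ! l else p l) = sat N \<theta> p" for xs
      by (rule sat_cong) (use assms False in auto)
  qed
qed

lemma one_var_comb_monadic_pred:
  assumes "k \<le> n"
  shows "one_var_comb n \<chi> \<Longrightarrow> monadic_pred k (\<lambda>xs. sat N \<chi> (\<lambda>l. if l < k then xs ! l else p l))"
proof (induction rule: one_var_comb.induct)
  case (coord_eq i j)
  show ?case by (rule monadic_pred_sat_Eq)
next
  case (one_coord \<theta> i)
  then show ?case using assms by (rule monadic_pred_sat_one_coord)
next
  case (neg \<phi>)
  then show ?case using monadic_pred_not by fastforce
next
  case (conj \<phi> \<psi>)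
  then show ?case using monadic_pred_conj by fastforce
qed

section \<open>Selecting coordinates\<close>

definition coords :: "(nat \<Rightarrow> nat) \<Rightarrow> nat \<Rightarrow> 'a list \<Rightarrow> 'a list" where
  "coords \<sigma> k xs = map (\<lambda>i. xs ! \<sigma> i) [0..<k]"

lemma length_coords [simp]: "length (coords \<sigma> k xs) = k"
  by (simp add: coords_def)

lemma nth_coords [simp]: "i < k \<Longrightarrow> coords \<sigma> k xs ! i = xs ! \<sigma> i"
  by (simp add: coords_def)

lemma set_coords_subset: "\<sigma> ` {..<k} \<subseteq> {..<length xs} \<Longrightarrow> set (coords \<sigma> k xs) \<subseteq> set xs"
  by (force simp: coords_def intro!: nth_mem)

lemma coords_eq_replicate_iff: "coords \<sigma> k xs = replicate k a \<longleftrightarrow> (\<forall>i<k. xs ! \<sigma> i = a)"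
  by (auto simp: list_eq_iff_nth_eq)

lemma coords_in_diag_iff:
  "0 < k \<Longrightarrow> coords \<sigma> k xs \<in> diag k \<longleftrightarrow> coords \<sigma> k xs = replicate k (xs ! \<sigma> 0)"
  by (auto simp: diag_def tuples_def coords_eq_replicate_iff)

lemma tuples_subset_diag: "k \<le> 1 \<Longrightarrow> tuples k \<subseteq> diag k"
  by (auto simp: tuples_def diag_def le_Suc_eq length_Suc_conv)

text \<open>A right inverse of \<^const>\<open>coords\<close>: the coordinates outside the image of \<open>\<sigma>\<close>
  repeat the first entry, so that the set of entries does not grow.\<close>

definition spread :: "nat \<Rightarrow> (nat \<Rightarrow> nat) \<Rightarrow> nat \<Rightarrow> 'a list \<Rightarrow> 'a list" where
  "spread n \<sigma> k t = map (\<lambda>j. if j \<in> \<sigma> ` {..<k} then t ! the_inv_into {..<k} \<sigma> j else t ! 0) [0..<n]"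

context
  fixes n k :: nat and \<sigma> :: "nat \<Rightarrow> nat"
  assumes inj: "inj_on \<sigma> {..<k}" and range: "\<sigma> ` {..<k} \<subseteq> {..<n}"
begin

lemma coords_spread: "length t = k \<Longrightarrow> coords \<sigma> k (spread n \<sigma> k t) = t"
  using inj range by (auto simp: list_eq_iff_nth_eq spread_def the_inv_into_f_f)

lemma inj_on_spread: "inj_on (spread n \<sigma> k) (tuples k)"
  by (rule inj_on_inverseI[where g = "coords \<sigma> k"]) (simp add: coords_spread tuples_def)

lemma set_spread:
  assumes "0 < k" "length t = k"
  shows "set (spread n \<sigma> k t) = set t"
proof
  have "spread n \<sigma> k t ! j \<in> set t" if "j < n" for j
  proof (cases "j \<in> \<sigma> ` {..<k}")
    case True
    then have "the_inv_into {..<k} \<sigma> j < k"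
      using the_inv_into_into[OF inj True] by blast
    then show ?thesis
      using that True assms(2) by (simp add: spread_def)
  next
    case False
    then show ?thesis
      using that assms by (simp add: spread_def)
  qed
  then show "set (spread n \<sigma> k t) \<subseteq> set t"
    by (auto simp: set_conv_nth spread_def)
  have "\<sigma> ` {..<k} \<subseteq> {..<length (spread n \<sigma> k t)}"
    using range by (simp add: spread_def)
  then show "set t \<subseteq> set (spread n \<sigma> k t)"
    using set_coords_subset coords_spread[OF assms(2)] by metis
qed

lemma spread_coords:
  assumes "0 < k" "xs \<in> tuples n" "\<forall>j<n. j \<notin> \<sigma> ` {..<k} \<longrightarrow> xs ! j = xs ! \<sigma> 0"
  shows "spread n \<sigma> k (coords \<sigma> k xs) = xs"
proof (rule nth_equalityI)
  show "length (spread n \<sigma> k (coords \<sigma> k xs)) = length xs"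
    using assms(2) by (simp add: spread_def tuples_def)
  fix j assume "j < length (spread n \<sigma> k (coords \<sigma> k xs))"
  then show "spread n \<sigma> k (coords \<sigma> k xs) ! j = xs ! j"
    using assms inj by (auto simp: spread_def the_inv_into_f_f)
qed

lemma spread_nth_outside_image:
  "0 < k \<Longrightarrow> \<forall>j<n. j \<notin> \<sigma> ` {..<k} \<longrightarrow> spread n \<sigma> k t ! j = spread n \<sigma> k t ! \<sigma> 0"
  using inj range by (auto simp: spread_def the_inv_into_f_f)

lemma mutually_algebraic_spread:
  assumes "0 < k" "mutually_algebraic k Y"
  shows "mutually_algebraic n (spread n \<sigma> k ` Y)"
proof -
  obtain m where m: "\<And>a. finite {t \<in> Y. a \<in> set t} \<and> card {t \<in> Y. a \<in> set t} \<le> m"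
    and Y: "Y \<subseteq> tuples k"
    using assms(2) unfolding mutually_algebraic_def by blast
  have inj_Y: "inj_on (spread n \<sigma> k) Y"
    using inj_on_spread Y by (rule inj_on_subset)
  have "{s \<in> spread n \<sigma> k ` Y. a \<in> set s} = spread n \<sigma> k ` {t \<in> Y. a \<in> set t}" for a
    using Y set_spread[OF assms(1)] by (auto simp: tuples_def)
  moreover have "spread n \<sigma> k ` Y \<subseteq> tuples n"
    by (auto simp: spread_def tuples_def)
  moreover have "card (spread n \<sigma> k ` {t \<in> Y. a \<in> set t}) = card {t \<in> Y. a \<in> set t}" for a
    by (rule card_image) (rule inj_on_subset[OF inj_Y], blast)
  ultimately show ?thesis
    unfolding mutually_algebraic_def using m by (auto intro!: exI[of _ m])
qed

lemma spread_notin_diag: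
  assumes "0 < k" "t \<in> tuples k" "t \<notin> diag k"
  shows "spread n \<sigma> k t \<notin> diag n"
proof
  assume "spread n \<sigma> k t \<in> diag n"
  then obtain a where "set t \<subseteq> {a}"
    using set_spread assms(1,2) by (fastforce simp: diag_def tuples_def)
  then have "t = replicate k a"
    using assms(2) replicate_length_same[of t a] by (force simp: tuples_def)
  then show False
    using assms(3) by (simp add: diag_def tuples_def)
qed

lemma definable_spread_image:
  assumes "definable S n {xs \<in> tuples n. coords \<sigma> k xs \<in> Y}" "Y \<subseteq> tuples k" "0 < k"
  shows "definable S n (spread n \<sigma> k ` Y)"
proof -
  let ?Q = "{xs \<in> {xs \<in> tuples n. coords \<sigma> k xs \<in> Y}. \<forall>j<n. j \<notin> \<sigma> ` {..<k} \<longrightarrow> xs ! j = xs ! \<sigma> 0}"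
  have "spread n \<sigma> k t \<in> ?Q" if "t \<in> Y" for t
  proof -
    have "length t = k"
      using that assms(2) by (auto simp: tuples_def)
    moreover have "length (spread n \<sigma> k t) = n"
      by (simp add: spread_def)
    ultimately show ?thesis
      using that spread_nth_outside_image[OF assms(3)] by (simp add: coords_spread tuples_def)
  qed
  moreover have "xs \<in> spread n \<sigma> k ` Y" if "xs \<in> ?Q" for xs
  proof (rule image_eqI)
    show "xs = spread n \<sigma> k (coords \<sigma> k xs)"
      using that spread_coords[OF assms(3), of xs] by simp
  qed (use that in simp)
  ultimately have "spread n \<sigma> k ` Y = ?Q"
    by blast
  moreover have "\<sigma> 0 < n"
    using range assms(3) by auto
  ultimately show ?thesis
    using definable_restrict_coords[OF assms(1)] by simp
qed

end

section \<open>Padded mutually algebraic sets\<close>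

definition off_diagonal_finite :: "('f, 'r, 'a) struct \<Rightarrow> bool" where
  "off_diagonal_finite M \<longleftrightarrow>
     (\<forall>k\<ge>2. \<forall>Y. definable M k Y \<longrightarrow> mutually_algebraic k Y \<longrightarrow> finite (Y - diag k))"

lemma finite_Diff_diag_if_coords_preimage_definable:
  assumes "off_diagonal_finite M" "definable M n {xs \<in> tuples n. coords \<sigma> k xs \<in> Y}"
    and "mutually_algebraic k Y" "inj_on \<sigma> {..<k}" "\<sigma> ` {..<k} \<subseteq> {..<n}"
  shows "finite (Y - diag k)"
proof (cases "k \<le> 1")
  case True
  then have "Y - diag k = {}"
    using tuples_subset_diag assms(3) unfolding mutually_algebraic_def by blast
  then show ?thesis
    by (simp only: finite.emptyI)
next
  case False
  have Y: "Y \<subseteq> tuples k"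
    using assms(3) by (simp add: mutually_algebraic_def)
  have "k \<le> n"
    using card_mono[OF _ assms(5)] card_image[OF assms(4)] by simp
  with False have "2 \<le> n" "0 < k"
    by auto
  then have "finite (spread n \<sigma> k ` Y - diag n)"
    using assms(1) definable_spread_image[OF assms(4,5,2) Y]
      mutually_algebraic_spread[OF assms(4,5) _ assms(3)]
    unfolding off_diagonal_finite_def by blast
  moreover have "spread n \<sigma> k ` (Y - diag k) \<subseteq> spread n \<sigma> k ` Y - diag n"
    using spread_notin_diag[OF assms(4,5)] Y False by auto
  ultimately have "finite (spread n \<sigma> k ` (Y - diag k))"
    by (rule finite_subset[rotated])
  moreover have "inj_on (spread n \<sigma> k) (Y - diag k)"
    using Y by (intro inj_on_subset[OF inj_on_spread[OF assms(4,5)]]) blast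
  ultimately show ?thesis
    by (rule finite_imageD)
qed

lemma one_var_definable_coords_eq:
  assumes "\<sigma> ` {..<k} \<subseteq> {..<n}" "length t = k"
  shows "one_var_definable S n {xs \<in> tuples n. coords \<sigma> k xs = t}"
proof -
  have \<sigma>: "\<forall>i<k. \<sigma> i < n"
    using assms(1) by auto
  let ?\<chi> = "conjs (map (\<lambda>i. Eq (Var (\<sigma> i)) (Var (n + i))) [0..<k])"
  have "one_var_comb n ?\<chi>"
    by (rule one_var_comb_conjs) (auto intro!: one_var_comb.one_coord[of _ "\<sigma> _"] simp del: upt_Suc)
  moreover have "coords \<sigma> k xs = t \<longleftrightarrow>
      sat S ?\<chi> (\<lambda>i. if i < n then xs ! i else t ! (i - n))" for xs
  proof -
    have "coords \<sigma> k xs = t \<longleftrightarrow> (\<forall>i<k. xs ! \<sigma> i = t ! i)"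
      using assms(2) by (auto simp: list_eq_iff_nth_eq)
    also have "\<dots> \<longleftrightarrow> sat S ?\<chi> (\<lambda>i. if i < n then xs ! i else t ! (i - n))"
      using \<sigma> by auto
    finally show ?thesis .
  qed
  then have "{xs \<in> tuples n. coords \<sigma> k xs = t} = defined_set S n ?\<chi> (\<lambda>j. t ! (j - n))"
    by (auto simp: defined_set_def)
  ultimately show ?thesis
    unfolding one_var_definable_def by blast
qed

definition coords_eq_fm :: "(nat \<Rightarrow> nat) \<Rightarrow> nat \<Rightarrow> ('f, 'r) fm" where
  "coords_eq_fm \<sigma> k = conjs (map (\<lambda>i. Eq (Var (\<sigma> i)) (Var (\<sigma> 0))) [0..<k])"

lemma sat_coords_eq_fm [simp]: "sat S (coords_eq_fm \<sigma> k) e \<longleftrightarrow> (\<forall>i<k. e (\<sigma> i) = e (\<sigma> 0))"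
  unfolding coords_eq_fm_def sat_conjs using lessThan_iff by (simp add: atLeast0LessThan) blast

lemma one_var_comb_coords_eq_fm:
  "0 < k \<Longrightarrow> \<sigma> ` {..<k} \<subseteq> {..<n} \<Longrightarrow> one_var_comb n (coords_eq_fm \<sigma> k)"
  unfolding coords_eq_fm_def
  by (intro one_var_comb_conjs) (auto intro!: one_var_comb.coord_eq simp: image_subset_iff)

text \<open>Quantifying away all coordinates but \<open>\<sigma> 0\<close> leaves a formula in one coordinate that
  says whether the constant tuple with that entry lies in \<open>Y\<close>.\<close>

definition diag_section_fm :: "nat \<Rightarrow> (nat \<Rightarrow> nat) \<Rightarrow> nat \<Rightarrow> ('f, 'r) fm \<Rightarrow> ('f, 'r) fm" where
  "diag_section_fm n \<sigma> k \<phi> = exs (filter (\<lambda>j. j \<noteq> \<sigma> 0) [0..<n]) (Conj \<phi> (coords_eq_fm \<sigma> k))"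

lemma one_var_comb_diag_section_fm: "one_var_comb n (diag_section_fm n \<sigma> k \<phi>)"
  by (rule one_var_comb.one_coord[of _ "\<sigma> 0"]) (auto simp: diag_section_fm_def)

lemma sat_diag_section_fm:
  assumes "\<sigma> ` {..<k} \<subseteq> {..<n}" "0 < k"
    and P: "defined_set M n \<phi> p = {xs \<in> tuples n. coords \<sigma> k xs \<in> Y}"
  shows "sat M (diag_section_fm n \<sigma> k \<phi>) (\<lambda>i. if i < n then xs ! i else p i) \<longleftrightarrow>
    replicate k (xs ! \<sigma> 0) \<in> Y"
proof
  assume "sat M (diag_section_fm n \<sigma> k \<phi>) (\<lambda>i. if i < n then xs ! i else p i)"
  then obtain e where e: "\<forall>i. i \<notin> set (filter (\<lambda>j. j \<noteq> \<sigma> 0) [0..<n]) \<longrightarrow>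
      e i = (if i < n then xs ! i else p i)" and "sat M \<phi> e" and E: "\<forall>i<k. e (\<sigma> i) = e (\<sigma> 0)"
    unfolding diag_section_fm_def sat_exs by auto
  have \<sigma>: "\<forall>i<k. \<sigma> i < n" "\<sigma> 0 < n"
    using assms(1,2) by auto
  define ys where "ys = map e [0..<n]"
  have "(\<lambda>i. if i < n then ys ! i else p i) = e" "ys \<in> tuples n"
    using e by (auto simp: ys_def tuples_def)
  then have "ys \<in> defined_set M n \<phi> p"
    using \<open>sat M \<phi> e\<close> by (simp add: defined_set_def)
  then have "coords \<sigma> k ys \<in> Y"
    using P by simp
  moreover have "coords \<sigma> k ys = replicate k (xs ! \<sigma> 0)"
    using E e \<sigma> by (simp add: coords_eq_replicate_iff ys_def)
  ultimately show "replicate k (xs ! \<sigma> 0) \<in> Y"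
    by simp
next
  assume "replicate k (xs ! \<sigma> 0) \<in> Y"
  define ys where "ys = replicate n (xs ! \<sigma> 0)"
  have "ys \<in> tuples n" "coords \<sigma> k ys = replicate k (xs ! \<sigma> 0)"
    using assms(1) by (auto simp: ys_def tuples_def coords_eq_replicate_iff)
  then have "ys \<in> defined_set M n \<phi> p"
    using P \<open>replicate k (xs ! \<sigma> 0) \<in> Y\<close> by simp
  then have "sat M \<phi> (\<lambda>i. if i < n then ys ! i else p i)"
    by (simp add: defined_set_def)
  moreover have "sat M (coords_eq_fm \<sigma> k) (\<lambda>i. if i < n then ys ! i else p i)"
    using assms(1,2) by (auto simp: ys_def)
  moreover have "\<forall>i. i \<notin> set (filter (\<lambda>j. j \<noteq> \<sigma> 0) [0..<n]) \<longrightarrow>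
      (if i < n then ys ! i else p i) = (if i < n then xs ! i else p i)"
    by (simp add: ys_def)
  ultimately show "sat M (diag_section_fm n \<sigma> k \<phi>) (\<lambda>i. if i < n then xs ! i else p i)"
    unfolding diag_section_fm_def sat_exs
    by (intro exI[of _ "\<lambda>i. if i < n then ys ! i else p i"]) simp
qed

lemma one_var_definable_coords_in_diag:
  assumes "\<sigma> ` {..<k} \<subseteq> {..<n}" "0 < k"
    and "defined_set M n \<phi> p = {xs \<in> tuples n. coords \<sigma> k xs \<in> Y}"
  shows "one_var_definable M n {xs \<in> tuples n. coords \<sigma> k xs \<in> Y \<inter> diag k}"
proof -
  let ?\<chi> = "Conj (coords_eq_fm \<sigma> k) (diag_section_fm n \<sigma> k \<phi>)"
  have "coords \<sigma> k xs \<in> Y \<inter> diag k \<longleftrightarrow> sat M ?\<chi> (\<lambda>i. if i < n then xs ! i else p i)" for xs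
  proof -
    have "\<forall>i<k. \<sigma> i < n"
      using assms(1) by auto
    then have "sat M (coords_eq_fm \<sigma> k) (\<lambda>i. if i < n then xs ! i else p i) \<longleftrightarrow>
        coords \<sigma> k xs = replicate k (xs ! \<sigma> 0)"
      using assms(2) by (simp add: coords_eq_replicate_iff)
    then show ?thesis
      using sat_diag_section_fm[OF assms, of xs] coords_in_diag_iff[OF assms(2), of \<sigma> xs] by auto
  qed
  then have "{xs \<in> tuples n. coords \<sigma> k xs \<in> Y \<inter> diag k} = defined_set M n ?\<chi> p"
    by (auto simp: defined_set_def)
  moreover have "one_var_comb n ?\<chi>"
    using assms(1,2) by (intro one_var_comb.conj one_var_comb_coords_eq_fm one_var_comb_diag_section_fm)
  ultimately show ?thesis
    unfolding one_var_definable_def by blast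
qed

lemma one_var_definable_padded_ma:
  assumes "off_diagonal_finite M" "definable M n P" "padded_ma n P"
  shows "one_var_definable M n P"
proof -
  obtain k l \<sigma> Y where "k + l = n" and bij: "bij_betw \<sigma> {..<n} {..<n}"
    and Y: "mutually_algebraic k Y"
    and P_take: "P = {xs \<in> tuples n. take k (map (\<lambda>i. xs ! \<sigma> i) [0..<n]) \<in> Y}"
    using assms(3) unfolding padded_ma_def by blast
  then have "k \<le> n"
    by simp
  then have P: "P = {xs \<in> tuples n. coords \<sigma> k xs \<in> Y}"
    using P_take by (simp add: coords_def take_map)
  have inj: "inj_on \<sigma> {..<k}" and range: "\<sigma> ` {..<k} \<subseteq> {..<n}"
    using bij \<open>k \<le> n\<close> by (auto simp: bij_betw_def intro: inj_on_subset)
  show ?thesis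
  proof (cases "k = 0")
    case True
    then have "P = (if [] \<in> Y then tuples n else {})"
      using P by (simp add: coords_def)
    then show ?thesis
      by (simp add: one_var_definable_tuples one_var_definable_empty)
  next
    case False
    obtain \<phi> p where "P = defined_set M n \<phi> p"
      using assms(2) definable_iff_defined_set by blast
    then have diag_part: "one_var_definable M n {xs \<in> tuples n. coords \<sigma> k xs \<in> Y \<inter> diag k}"
      using False range P by (intro one_var_definable_coords_in_diag) auto
    have off_diag_part:
      "one_var_definable M n (\<Union>t\<in>Y - diag k. {xs \<in> tuples n. coords \<sigma> k xs = t})"
    proof (rule one_var_definable_UN)
      show "finite (Y - diag k)"
        using finite_Diff_diag_if_coords_preimage_definable assms(1,2) Y inj range P by blast
      show "one_var_definable M n {xs \<in> tuples n. coords \<sigma> k xs = t}" if "t \<in> Y - diag k" for t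
      proof (rule one_var_definable_coords_eq[OF range])
        show "length t = k"
          using that Y by (auto simp: mutually_algebraic_def tuples_def)
      qed
    qed
    have "P = {xs \<in> tuples n. coords \<sigma> k xs \<in> Y \<inter> diag k} \<union>
        (\<Union>t\<in>Y - diag k. {xs \<in> tuples n. coords \<sigma> k xs = t})"
      unfolding P by auto
    then show ?thesis
      using one_var_definable_Un[OF diag_part off_diag_part] by simp
  qed
qed

lemma one_var_definable_bool_comb:
  assumes "off_diagonal_finite M"
  shows "Y \<in> bool_comb n {P. definable M n P \<and> padded_ma n P} \<Longrightarrow> one_var_definable M n Y"
proof (induction rule: bool_comb.induct)
  case (base A)
  then show ?case by (auto intro: one_var_definable_padded_ma[OF assms])
qed (auto intro: one_var_definable_tuples one_var_definable_Un one_var_definable_Diff)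

section \<open>Transfer to models of the theory\<close>

lemma models_Th_params:
  assumes "models_Th N M" and M: "\<forall>e. (\<forall>i\<ge>n. e i = w i) \<longrightarrow> sat M \<psi> e"
  shows "\<exists>g. \<forall>e. (\<forall>i\<ge>n. e i = g i) \<longrightarrow> sat N \<psi> e"
proof -
  obtain vs where vs: "set vs = fv \<psi> - {..<n}"
    using finite_list finite_fv by (metis finite_Diff)
  \<comment> \<open>the sentence: there are parameters \<open>vs\<close> such that \<open>\<psi>\<close> holds for all coordinates\<close>
  define \<sigma> where "\<sigma> = exs vs (Neg (exs [0..<n] (Neg \<psi>)))"
  have "fv \<sigma> = fv \<psi> - {..<n} - set vs"
    by (auto simp: \<sigma>_def)
  then have "sentence \<sigma>"
    using vs by (simp add: sentence_def)
  moreover have "sat M \<sigma> e" for e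
  proof -
    define e1 where "e1 i = (if i \<in> set vs then w i else e i)" for i
    have e1: "\<forall>i. i \<notin> set vs \<longrightarrow> e1 i = e i"
      by (simp add: e1_def)
    have "sat M \<psi> e2" if "\<forall>i. i \<notin> set [0..<n] \<longrightarrow> e2 i = e1 i" for e2
    proof -
      have "sat M \<psi> (\<lambda>i. if i < n then e2 i else w i)"
        by (rule M[rule_format]) simp
      moreover have "sat M \<psi> (\<lambda>i. if i < n then e2 i else w i) = sat M \<psi> e2"
        by (rule sat_cong) (use that vs in \<open>auto simp: e1_def\<close>)
      ultimately show ?thesis
        by simp
    qed
    then show ?thesis
      unfolding \<sigma>_def sat_exs sat.simps using e1 by blast
  qed
  ultimately have "sat N \<sigma> (\<lambda>_. undefined)"
    using assms(1) unfolding models_Th_def by blast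
  then obtain g where "\<forall>e. (\<forall>i. i \<notin> set [0..<n] \<longrightarrow> e i = g i) \<longrightarrow> sat N \<psi> e"
    unfolding \<sigma>_def sat_exs sat.simps by blast
  then have "\<forall>e. (\<forall>i\<ge>n. e i = g i) \<longrightarrow> sat N \<psi> e"
    by (simp add: not_less)
  then show ?thesis
    by blast
qed

lemma ma_structure_one_var_definable:
  assumes "ma_structure M" "off_diagonal_finite M" "definable M n Z"
  shows "one_var_definable M n Z"
  using assms one_var_definable_bool_comb unfolding ma_structure_def by blast

lemma monadically_definable_transfer:
  assumes "models_Th N M" "fv \<phi> \<subseteq> {..<n}" "k \<le> n"
    and "one_var_definable M n (defined_set M n \<phi> w)"
  shows "monadically_definable k (defined_set N k \<phi> p)"
proof -
  obtain \<chi> q where \<chi>: "one_var_comb n \<chi>" and eq: "defined_set M n \<phi> w = defined_set M n \<chi> q"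
    using assms(4) unfolding one_var_definable_def by blast
  have "\<forall>e. (\<forall>i\<ge>n. e i = q i) \<longrightarrow> sat M (iff_fm \<phi> \<chi>) e"
  proof (intro allI impI)
    fix e assume e: "\<forall>i\<ge>n. e i = q i"
    define xs where "xs = map e [0..<n]"
    have xs: "xs \<in> tuples n" and env: "(\<lambda>i. if i < n then xs ! i else q i) = e"
      using e by (auto simp: xs_def tuples_def)
    have "sat M \<phi> e \<longleftrightarrow> sat M \<phi> (\<lambda>i. if i < n then xs ! i else w i)"
      by (rule sat_cong) (use assms(2) in \<open>auto simp: xs_def\<close>)
    also have "\<dots> \<longleftrightarrow> xs \<in> defined_set M n \<phi> w"
      using xs by (simp add: defined_set_def)
    also have "\<dots> \<longleftrightarrow> sat M \<chi> e"
      unfolding eq using xs env by (simp add: defined_set_def)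
    finally show "sat M (iff_fm \<phi> \<chi>) e"
      by simp
  qed
  then obtain g where g: "\<forall>e. (\<forall>i\<ge>n. e i = g i) \<longrightarrow> sat N (iff_fm \<phi> \<chi>) e"
    using models_Th_params[OF assms(1)] by blast
  define r where "r i = (if i < n then p i else g i)" for i
  have "sat N \<phi> (\<lambda>i. if i < k then xs ! i else p i) \<longleftrightarrow>
      sat N \<chi> (\<lambda>i. if i < k then xs ! i else r i)" for xs
  proof -
    have "sat N \<phi> (\<lambda>i. if i < k then xs ! i else p i) \<longleftrightarrow>
        sat N \<phi> (\<lambda>i. if i < k then xs ! i else r i)"
      by (rule sat_cong) (use assms(2) in \<open>auto simp: r_def\<close>)
    also have "\<dots> \<longleftrightarrow> sat N \<chi> (\<lambda>i. if i < k then xs ! i else r i)"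
      using g[rule_format, of "\<lambda>i. if i < k then xs ! i else r i"] assms(3) by (simp add: r_def)
    finally show ?thesis .
  qed
  then have "defined_set N k \<phi> p = {xs \<in> tuples k. sat N \<chi> (\<lambda>i. if i < k then xs ! i else r i)}"
    by (simp add: defined_set_def)
  then show ?thesis
    using one_var_comb_monadic_pred[OF assms(3) \<chi>, of N r] by (simp add: monadic_pred_def)
qed

theorem lemma4p4:
  fixes M :: "('f, 'r, 'a) struct" and N :: "('f, 'r, 'b) struct"
  assumes "infinite (UNIV :: 'a set)"
    and "ma_structure M"
    and "models_Th N M"
    and "non_monadic_model N"
  shows "\<exists>k \<ge> 2. \<exists>Y. definable M k Y \<and> mutually_algebraic k Y \<and> infinite (Y - diag k)"
proof (rule ccontr)
  assume "\<not> ?thesis"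
  then have off_diag: "off_diagonal_finite M"
    unfolding off_diagonal_finite_def by blast
  obtain k Y where "definable N k Y" and not_monadic: "\<not> monadically_definable k Y"
    using assms(4) unfolding non_monadic_model_def by blast
  then obtain \<phi> p where Y: "Y = defined_set N k \<phi> p"
    using definable_iff_defined_set by blast
  obtain n0 where "\<forall>i\<in>fv \<phi>. i < n0"
    using finite_fv[of \<phi>, unfolded finite_nat_set_iff_bounded] ..
  then have fv: "fv \<phi> \<subseteq> {..<max n0 k}"
    by auto
  have "one_var_definable M (max n0 k) (defined_set M (max n0 k) \<phi> (\<lambda>_. undefined))"
    by (rule ma_structure_one_var_definable[OF assms(2) off_diag]) (auto simp: definable_iff_defined_set)
  then have "monadically_definable k Y"
    unfolding Y by (rule monadically_definable_transfer[OF assms(3) fv max.cobounded2])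
  with not_monadic show False ..
qed

end
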